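(* In the setting of the linkage $\mathcal{L}$, for each case $k\in\{1,2,3\}$ of the classification below there is a planar map $\sigma_k$ of the $xz$-plane with $\sigma_k(A_0)=B_0$ and $\sigma_k(A_j)=B_j$: (1) If $L_j$ satisfies case 1 (i.e. $v_j=v_0=\pm\tfrac{u_0}{t_0}$ and $u_j=\tfrac{u_0t_j}{t_0}$, with $b$ on the compatible branch), then $\sigma_1$ is the central scaling with center $S_2$ mapping $S_1$ to $S_3$. (2) If $L_j$ satisfies case 2 (i.e. $v_0=\mp\tfrac{u_0}{t_0}$, $v_j=\mp\tfrac{u_0(s_0^2-t_0^2)}{t_0(s_j^2-t_j^2)}$, $u_j=\tfrac{\sqrt{t_0v_j(s_j^2t_0v_j\pm s_0^2u_0\mp t_0^2u_0)}}{t_0}$, with $b$ on the compatible branch), then $\sigma_2$ is the perspective collineation with center $S_2$ and axis the line orthogonal to $q$ through the midpoint $M$ of $S_1$ and $S_3$, mapping $S_1$ to $S_3$. (3) If $L_j$ satisfies case 3 (i.e. $v_j=v_0$, $u_j=\sqrt{s_j^2v_0^2-s_0^2v_0^2+u_0^2}$, $t_j=\sqrt{s_j^2-s_0^2+t_0^2}$), then with $\alpha$ and $\beta$ the lines orthogonal to $q$ through $A_0$ and $B_0$ respectively, $A_j\in\alpha$, $B_j\in\beta$, and $\sigma_3$ is the central perspectivity with center $S_2$ mapping points of $\alpha$ to points of $\beta$.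
   Context: Planar linkage $\mathcal{L}$ in the $xz$-plane: the $z$-axis is the line $q$; $S_2=(0,0,0)^T$, $S_1=(0,0,a)^T$ with $a>0$, $S_3=(0,0,b)^T$ with $b\neq0$, sliding along $q$. For each index $i\in\{0,\dots,p\}$ there are points $A_i=(d_i,0,z_i)^T$ and $B_i=v_iA_i$ ($v_i\neq 0$ fixed) with fixed lengths $s_i=\overline{S_2A_i}>0$, $t_i=\overline{S_1A_i}>0$, $u_i=\overline{S_3B_i}>0$, so that $d_i=\frac{\sqrt{2a^2s_i^2+2a^2t_i^2+2s_i^2t_i^2-a^4-s_i^4-t_i^4}}{2a}$, $z_i=\frac{a^2+s_i^2-t_i^2}{2a}$, and $b$ is determined from $\|B_0-S_3\|^2=u_0^2$ (two branches $b_\pm$; in cases 1 and 2 the branch is the one for which the linkage is mobile, depending on the sign of $z_0$ and of $v_0$). A central scaling is a homothety; a perspective collineation of the plane is a projective collineation fixing every point of a line (axis) and every line through a point (center). *)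

theory Defs
  imports "HOL-Analysis.Analysis"
begin

text \<open>Points of the xz-plane are represented as pairs (x, z) :: real \<times> real.
  The axis q is the z-axis {(0,z)}.\<close>

type_synonym pt = "real \<times> real"

definition dcoord :: "real \<Rightarrow> real \<Rightarrow> real \<Rightarrow> real" where
  "dcoord a s t = sqrt (2*a^2* s^2 + 2*a^2* t^2 + 2* s^2* t^2 - a^4 - s^4 - t^4) / (2*a)"

definition zcoord :: "real \<Rightarrow> real \<Rightarrow> real \<Rightarrow> real" where
  "zcoord a s t = (a^2 + s^2 - t^2) / (2*a)"

definition Apt :: "real \<Rightarrow> real \<Rightarrow> real \<Rightarrow> pt" where
  "Apt a s t = (dcoord a s t, zcoord a s t)"

definition Bpt :: "real \<Rightarrow> real \<Rightarrow> real \<Rightarrow> real \<Rightarrow> pt" where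
  "Bpt a s t v = v *\<^sub>R Apt a s t"

definition S1 :: "real \<Rightarrow> pt" where "S1 a = (0, a)"
definition S2 :: pt where "S2 = (0, 0)"
definition S3 :: "real \<Rightarrow> pt" where "S3 b = (0, b)"

text \<open>The two branches b_+ / b_- of the solution of ||B_0 - S_3||^2 = u_0^2,
  selected by a sign e = 1 or e = -1.\<close>
definition bbranch :: "real \<Rightarrow> real \<Rightarrow> real \<Rightarrow> real \<Rightarrow> real \<Rightarrow> real \<Rightarrow> real" where
  "bbranch a s0 t0 u0 v0 e =
     v0 * zcoord a s0 t0 + e * sqrt (u0^2 - v0^2 * (dcoord a s0 t0)^2)"

definition central_scaling :: "pt \<Rightarrow> real \<Rightarrow> pt \<Rightarrow> pt" where
  "central_scaling C r P = C + r *\<^sub>R (P - C)"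

text \<open>Projective plane via homogeneous coordinates in real^3; lines are
  nonzero covectors l, with X on l iff l \<bullet> X = 0.\<close>
definition hom :: "pt \<Rightarrow> real^3" where
  "hom P = vector [fst P, snd P, 1]"

definition coll_maps :: "real^3^3 \<Rightarrow> pt \<Rightarrow> pt \<Rightarrow> bool" where
  "coll_maps H P Q \<longleftrightarrow> (\<exists>c. c \<noteq> 0 \<and> H *v hom P = c *\<^sub>R hom Q)"

definition perspective_collineation :: "real^3^3 \<Rightarrow> real^3 \<Rightarrow> real^3 \<Rightarrow> bool" where
  "perspective_collineation H C l0 \<longleftrightarrow>
     invertible H \<and>
     (\<forall>X. X \<noteq> 0 \<and> l0 \<bullet> X = 0 \<longrightarrow> (\<exists>c. c \<noteq> 0 \<and> H *v X = c *\<^sub>R X)) \<and>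
     (\<forall>l. l \<noteq> 0 \<and> l \<bullet> C = 0 \<longrightarrow> (\<forall>X. l \<bullet> X = 0 \<longrightarrow> l \<bullet> (H *v X) = 0))"

definition hline :: "real \<Rightarrow> pt set" where
  "hline h = {P. snd P = h}"

definition central_perspectivity :: "pt \<Rightarrow> pt set \<Rightarrow> pt set \<Rightarrow> (pt \<Rightarrow> pt) \<Rightarrow> bool" where
  "central_perspectivity C \<alpha> \<beta> \<sigma> \<longleftrightarrow>
     bij_betw \<sigma> \<alpha> \<beta> \<and> (\<forall>P\<in>\<alpha>. collinear {C, P, \<sigma> P})"

end

theory Submission
  imports Defs
begin

text \<open>All three maps are determined by S2 and the fact that every B_i is the
  multiple v_i A_i; the branch hypotheses only serve to pin down b. In case 1 the
  chosen branch gives b = v_0 a, so the homothety P \<mapsto> v_0 P works. In case 2 it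
  gives b = v_0 (2 z_0 - a) = v_0 (s_0^2 - t_0^2) / a, and the hypothesis on v_j makes
  v_j (2 z_j - a) = b as well; the harmonic homology P \<mapsto> b P / (2 z - a) then sends
  every such A_i to v_i A_i. In case 3 the hypothesis on t_j puts A_j at the height of
  A_0, and P \<mapsto> v_0 P is the perspectivity.\<close>

lemma dcoord_zcoord_dist_S1:
  fixes a s t :: real
  assumes "a > 0"
    and "2*a^2 * s^2 + 2*a^2 * t^2 + 2 * s^2 * t^2 - a^4 - s^4 - t^4 \<ge> 0"
  shows "(dcoord a s t)^2 + (zcoord a s t - a)^2 = t^2"
proof -
  have "(dcoord a s t)^2 = (2*a^2 * s^2 + 2*a^2 * t^2 + 2 * s^2 * t^2 - a^4 - s^4 - t^4) / (2*a)^2"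
    unfolding dcoord_def power_divide using assms(2) by simp
  moreover have "zcoord a s t - a = (s^2 - t^2 - a^2) / (2*a)"
    unfolding zcoord_def using assms(1) by (simp add: field_simps power2_eq_square)
  ultimately have "(dcoord a s t)^2 + (zcoord a s t - a)^2
      = ((2*a^2 * s^2 + 2*a^2 * t^2 + 2 * s^2 * t^2 - a^4 - s^4 - t^4) + (s^2 - t^2 - a^2)^2) / (2*a)^2"
    by (simp add: power_divide add_divide_distrib)
  also have "(2*a^2 * s^2 + 2*a^2 * t^2 + 2 * s^2 * t^2 - a^4 - s^4 - t^4) + (s^2 - t^2 - a^2)^2
      = (2*a)^2 * t^2"
    by (simp add: power2_eq_square power4_eq_xxxx algebra_simps)
  finally show ?thesis using assms(1) by simp
qed

lemma two_zcoord_minus: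
  assumes "a \<noteq> 0"
  shows "2 * zcoord a s t - a = (s^2 - t^2) / a"
  unfolding zcoord_def using assms by (simp add: field_simps power2_eq_square)

lemma bbranch_discriminant:
  fixes a s t u v :: real
  assumes "a > 0"
    and "2*a^2 * s^2 + 2*a^2 * t^2 + 2 * s^2 * t^2 - a^4 - s^4 - t^4 \<ge> 0"
    and "u^2 = v^2 * t^2"
  shows "sqrt (u^2 - v^2 * (dcoord a s t)^2) = \<bar>v * (zcoord a s t - a)\<bar>"
proof -
  have "u^2 - v^2 * (dcoord a s t)^2 = (v * (zcoord a s t - a))^2"
  proof -
    have "u^2 = v^2 * ((dcoord a s t)^2 + (zcoord a s t - a)^2)"
      using dcoord_zcoord_dist_S1[OF assms(1,2)] assms(3) by simp
    then show ?thesis by (simp add: power_mult_distrib distrib_left)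
  qed
  then show ?thesis by simp
qed

lemma bbranch_minus_sgn:
  assumes "a > 0"
    and "2*a^2 * s^2 + 2*a^2 * t^2 + 2 * s^2 * t^2 - a^4 - s^4 - t^4 \<ge> 0"
    and "u^2 = v^2 * t^2"
  shows "bbranch a s t u v (- sgn (v * (zcoord a s t - a))) = v * a"
  using bbranch_discriminant[OF assms] sgn_mult_abs[of "v * (zcoord a s t - a)"]
  unfolding bbranch_def by (simp add: algebra_simps)

lemma bbranch_sgn:
  assumes "a > 0"
    and "2*a^2 * s^2 + 2*a^2 * t^2 + 2 * s^2 * t^2 - a^4 - s^4 - t^4 \<ge> 0"
    and "u^2 = v^2 * t^2"
  shows "bbranch a s t u v (sgn (v * (zcoord a s t - a))) = v * (2 * zcoord a s t - a)"
  using bbranch_discriminant[OF assms] sgn_mult_abs[of "v * (zcoord a s t - a)"]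
  unfolding bbranch_def by (simp add: algebra_simps)

lemma sq_eq_of_eq_sign_div:
  fixes e u v t :: real
  assumes "e = 1 \<or> e = -1" and "t \<noteq> 0" and "v = e * u / t"
  shows "u^2 = v^2 * t^2"
proof -
  have "t * v = e * u" using assms(2,3) by simp
  then have "(t * v)^2 = u^2" using assms(1) by auto
  then show ?thesis by (simp add: power_mult_distrib mult.commute)
qed

lemma central_scaling_S2: "central_scaling S2 r P = r *\<^sub>R P"
  by (simp add: central_scaling_def S2_def zero_prod_def[symmetric])

text \<open>In affine coordinates this is the harmonic homology
  P \<mapsto> b P / (2 z - a), where z is the height of P.\<close>
definition homology_matrix :: "real \<Rightarrow> real \<Rightarrow> real^3^3" where
  "homology_matrix a b = vector [vector [1,0,0], vector [0,1,0], vector [0, 2/b, 1 - (a+b)/b]]"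

lemma homology_matrix_mult:
  "homology_matrix a b *v X = vector [X$1, X$2, (2/b) * X$2 + (1 - (a+b)/b) * X$3]"
  by (simp add: homology_matrix_def vec_eq_iff forall_3 matrix_vector_mult_def sum_3)

lemma invertible_homology_matrix:
  assumes "a \<noteq> 0" "b \<noteq> 0"
  shows "invertible (homology_matrix a b)"
proof -
  have "homology_matrix a b ** homology_matrix b a = mat 1"
       "homology_matrix b a ** homology_matrix a b = mat 1"
    using assms by (simp_all add: homology_matrix_def vec_eq_iff forall_3
        matrix_matrix_mult_def sum_3 mat_def field_simps)
  then show ?thesis unfolding invertible_def by blast
qed

lemma perspective_collineation_homology_matrix:
  assumes "a \<noteq> 0" "b \<noteq> 0"
  shows "perspective_collineation (homology_matrix a b) (hom S2) (vector [0, 1, - (a + b) / 2])"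
  unfolding perspective_collineation_def
proof (intro conjI allI impI)
  show "invertible (homology_matrix a b)" using invertible_homology_matrix[OF assms] .
next
  fix X :: "real^3"
  assume "X \<noteq> 0 \<and> vector [0, 1, - (a + b) / 2] \<bullet> X = 0"
  then have "X$2 = (a+b)/2 * X$3" by (simp add: inner_vec_def sum_3 field_simps)
  then have "homology_matrix a b *v X = 1 *\<^sub>R X"
    using assms(2) by (simp add: homology_matrix_mult vec_eq_iff forall_3 field_simps)
  then show "\<exists>c. c \<noteq> 0 \<and> homology_matrix a b *v X = c *\<^sub>R X" by auto
next
  fix l X :: "real^3"
  assume "l \<noteq> 0 \<and> l \<bullet> hom S2 = 0" "l \<bullet> X = 0"
  then show "l \<bullet> (homology_matrix a b *v X) = 0"
    by (simp add: homology_matrix_mult hom_def S2_def inner_vec_def sum_3)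
qed

lemma coll_maps_homology_matrix:
  assumes "b \<noteq> 0" "v \<noteq> 0" and "v * (2 * snd P - a) = b"
  shows "coll_maps (homology_matrix a b) P (v *\<^sub>R P)"
  unfolding coll_maps_def
proof (intro exI conjI)
  show "1 / v \<noteq> 0" using assms(2) by simp
  show "homology_matrix a b *v hom P = (1 / v) *\<^sub>R hom (v *\<^sub>R P)"
    using assms by (simp add: homology_matrix_mult hom_def vec_eq_iff forall_3 field_simps)
qed

lemma bij_betw_scaleR_hline:
  fixes c z :: real
  assumes "c \<noteq> 0"
  shows "bij_betw (\<lambda>P. c *\<^sub>R P) (hline z) (hline (c * z))"
  by (rule bij_betwI[where g = "\<lambda>P. (1 / c) *\<^sub>R P"]) (use assms in \<open>auto simp: hline_def\<close>)

lemma central_perspectivity_scaleR: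
  assumes "c \<noteq> 0"
  shows "central_perspectivity S2 (hline z) (hline (c * z)) (\<lambda>P. c *\<^sub>R P)"
proof -
  have "collinear {S2, P, c *\<^sub>R P}" for P :: pt
    unfolding S2_def zero_prod_def[symmetric] collinear_lemma by blast
  then show ?thesis
    unfolding central_perspectivity_def using bij_betw_scaleR_hline[OF assms] by blast
qed

lemma mobile_homothety:
  assumes "a > 0" and "t0 > 0"
    and "2*a^2 * s0^2 + 2*a^2 * t0^2 + 2 * s0^2 * t0^2 - a^4 - s0^4 - t0^4 \<ge> 0"
    and "e = 1 \<or> e = -1" and "vj = v0" and "v0 = e * u0 / t0"
    and "b = bbranch a s0 t0 u0 v0 (- sgn (v0 * (zcoord a s0 t0 - a)))"
  shows "\<exists>r. central_scaling S2 r (S1 a) = S3 b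
           \<and> central_scaling S2 r (Apt a s0 t0) = Bpt a s0 t0 v0
           \<and> central_scaling S2 r (Apt a sj tj) = Bpt a sj tj vj"
proof -
  have "b = v0 * a"
    using assms bbranch_minus_sgn[OF assms(1,3) sq_eq_of_eq_sign_div[OF assms(4) _ assms(6)]]
    by simp
  then show ?thesis
    by (intro exI[of _ v0]) (simp add: central_scaling_S2 S1_def S3_def Bpt_def assms(5))
qed

lemma mobile_homology:
  assumes "a > 0" "b \<noteq> 0" "t0 > 0" "v0 \<noteq> 0" "vj \<noteq> 0"
    and "2*a^2 * s0^2 + 2*a^2 * t0^2 + 2 * s0^2 * t0^2 - a^4 - s0^4 - t0^4 \<ge> 0"
    and e: "e = 1 \<or> e = -1" and v0: "v0 = - e * u0 / t0"
    and vj: "vj = - e * u0 * (s0^2 - t0^2) / (t0 * (sj^2 - tj^2))"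
    and "b = bbranch a s0 t0 u0 v0 (sgn (v0 * (zcoord a s0 t0 - a)))"
  shows "\<exists>H. perspective_collineation H (hom S2) (vector [0, 1, - (a + b) / 2])
           \<and> coll_maps H (S1 a) (S3 b)
           \<and> coll_maps H (Apt a s0 t0) (Bpt a s0 t0 v0)
           \<and> coll_maps H (Apt a sj tj) (Bpt a sj tj vj)"
proof -
  have "- e = 1 \<or> - e = -1" "t0 \<noteq> 0" "v0 = (- e) * u0 / t0" using e v0 assms(3) by auto
  then have "u0^2 = v0^2 * t0^2" by (rule sq_eq_of_eq_sign_div)
  then have b0: "v0 * (2 * snd (Apt a s0 t0) - a) = b"
    using bbranch_sgn[OF assms(1,6)] assms(10) by (simp add: Apt_def)
  have "sj^2 - tj^2 \<noteq> 0" using vj assms(5) by auto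
  then have "vj * (sj^2 - tj^2) = - e * u0 * (s0^2 - t0^2) / t0"
    using vj assms(3) by (simp add: field_simps)
  then have "vj * (sj^2 - tj^2) = v0 * (s0^2 - t0^2)"
    using v0 by simp
  then have bj: "vj * (2 * snd (Apt a sj tj) - a) = b"
    using b0 assms(1) by (simp add: Apt_def two_zcoord_minus)
  have "coll_maps (homology_matrix a b) (S1 a) ((b / a) *\<^sub>R S1 a)"
    using assms(1,2) by (intro coll_maps_homology_matrix) (simp_all add: S1_def)
  then have "coll_maps (homology_matrix a b) (S1 a) (S3 b)"
    using assms(1) by (simp add: S1_def S3_def)
  then show ?thesis
    using perspective_collineation_homology_matrix[of a b] assms(1,2,4,5)
      coll_maps_homology_matrix[OF assms(2) _ b0] coll_maps_homology_matrix[OF assms(2) _ bj]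
    by (auto simp: Bpt_def)
qed

lemma mobile_perspectivity:
  assumes "tj > 0" "v0 \<noteq> 0" and "vj = v0" and tj: "tj = sqrt (sj^2 - s0^2 + t0^2)"
  shows "Apt a sj tj \<in> hline (snd (Apt a s0 t0))
    \<and> Bpt a sj tj vj \<in> hline (snd (Bpt a s0 t0 v0))
    \<and> (\<exists>\<sigma>. central_perspectivity S2 (hline (snd (Apt a s0 t0))) (hline (snd (Bpt a s0 t0 v0))) \<sigma>
         \<and> \<sigma> (Apt a s0 t0) = Bpt a s0 t0 v0 \<and> \<sigma> (Apt a sj tj) = Bpt a sj tj vj)"
proof -
  have "sj^2 - s0^2 + t0^2 > 0" using tj assms(1) by simp
  then have "tj^2 = sj^2 - s0^2 + t0^2" using tj by simp
  then have same_height: "snd (Apt a sj tj) = snd (Apt a s0 t0)"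
    by (simp add: Apt_def zcoord_def)
  have "Apt a sj tj \<in> hline (snd (Apt a s0 t0))"
    using same_height by (simp add: hline_def)
  moreover have "Bpt a sj tj vj \<in> hline (snd (Bpt a s0 t0 v0))"
    using same_height assms(3) by (simp add: hline_def Bpt_def)
  moreover have "central_perspectivity S2 (hline (snd (Apt a s0 t0)))
      (hline (snd (Bpt a s0 t0 v0))) (\<lambda>P. v0 *\<^sub>R P)"
    using central_perspectivity_scaleR[OF assms(2)] by (simp add: Bpt_def)
  ultimately show ?thesis
    using assms(3) by (auto simp: Bpt_def)
qed

theorem mainTheorem2:
  fixes a b :: real and p j :: nat and s t u v :: "nat \<Rightarrow> real"
  assumes a_pos: "a > 0" and b_nz: "b \<noteq> 0"
    and j_range: "j \<in> {1..p}"
    and pos: "\<And>i. i \<le> p \<Longrightarrow> s i > 0 \<and> t i > 0 \<and> u i > 0 \<and> v i \<noteq> 0"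
    and tri: "\<And>i. i \<le> p \<Longrightarrow>
       2*a^2*(s i)^2 + 2*a^2*(t i)^2 + 2*(s i)^2*(t i)^2 - a^4 - (s i)^4 - (t i)^4 \<ge> 0"
    and b_root: "(fst (Bpt a (s 0) (t 0) (v 0)))^2
                 + (snd (Bpt a (s 0) (t 0) (v 0)) - b)^2 = (u 0)^2"
  shows
   "((\<exists>e::real. (e = 1 \<or> e = -1) \<and> v j = v 0 \<and> v 0 = e * u 0 / t 0)
      \<and> u j = u 0 * t j / t 0
      \<and> b = bbranch a (s 0) (t 0) (u 0) (v 0) (- sgn (v 0 * (zcoord a (s 0) (t 0) - a)))
     \<longrightarrow> (\<exists>r. central_scaling S2 r (S1 a) = S3 b
              \<and> central_scaling S2 r (Apt a (s 0) (t 0)) = Bpt a (s 0) (t 0) (v 0)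
              \<and> central_scaling S2 r (Apt a (s j) (t j)) = Bpt a (s j) (t j) (v j)))
   \<and>
    ((\<exists>e::real. (e = 1 \<or> e = -1)
        \<and> v 0 = - e * u 0 / t 0
        \<and> v j = - e * u 0 * ((s 0)^2 - (t 0)^2) / (t 0 * ((s j)^2 - (t j)^2))
        \<and> u j = sqrt (t 0 * v j * ((s j)^2 * t 0 * v j + e * (s 0)^2 * u 0 - e * (t 0)^2 * u 0)) / t 0)
      \<and> b = bbranch a (s 0) (t 0) (u 0) (v 0) (sgn (v 0 * (zcoord a (s 0) (t 0) - a)))
     \<longrightarrow> (\<exists>H. perspective_collineation H (hom S2) (vector [0, 1, - (a + b) / 2])
              \<and> coll_maps H (S1 a) (S3 b)
              \<and> coll_maps H (Apt a (s 0) (t 0)) (Bpt a (s 0) (t 0) (v 0))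
              \<and> coll_maps H (Apt a (s j) (t j)) (Bpt a (s j) (t j) (v j))))
   \<and>
    (v j = v 0
      \<and> u j = sqrt ((s j)^2 * (v 0)^2 - (s 0)^2 * (v 0)^2 + (u 0)^2)
      \<and> t j = sqrt ((s j)^2 - (s 0)^2 + (t 0)^2)
     \<longrightarrow> Apt a (s j) (t j) \<in> hline (snd (Apt a (s 0) (t 0)))
       \<and> Bpt a (s j) (t j) (v j) \<in> hline (snd (Bpt a (s 0) (t 0) (v 0)))
       \<and> (\<exists>\<sigma>. central_perspectivity S2 (hline (snd (Apt a (s 0) (t 0))))
                  (hline (snd (Bpt a (s 0) (t 0) (v 0)))) \<sigma>
              \<and> \<sigma> (Apt a (s 0) (t 0)) = Bpt a (s 0) (t 0) (v 0)
              \<and> \<sigma> (Apt a (s j) (t j)) = Bpt a (s j) (t j) (v j)))"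
proof -
  have p0: "t 0 > 0" "v 0 \<noteq> 0" and pj: "t j > 0" "v j \<noteq> 0"
    using pos[of 0] pos[of j] j_range by auto
  have tri0: "2*a^2 * (s 0)^2 + 2*a^2 * (t 0)^2 + 2 * (s 0)^2 * (t 0)^2
      - a^4 - (s 0)^4 - (t 0)^4 \<ge> 0"
    using tri by simp
  show ?thesis
    apply (rule conjI[OF impI conjI[OF impI impI]]; elim conjE exE)
      apply (rule mobile_homothety[OF a_pos p0(1) tri0]; assumption)
     apply (rule mobile_homology[OF a_pos b_nz p0 pj(2) tri0]; assumption)
    apply (rule mobile_perspectivity[OF pj(1) p0(2)]; assumption)
    done
qed

end
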